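(* Let $f\in\mathbb{F}_q[t][X]$ have $X$-degree $n\ge1$, and for $0\le i\le n-1$ let $B_i=\sup\{m\in\mathbb{N}:(m,i)\in N(f)+\{(0,-1)\}\}$. Let $g\in\mathbb{F}_q[t][X]$ be a nonzero polynomial dividing $f$ in $\mathbb{F}_q[t][X]$ and write $\Phi(g):=fg'/g=\sum_{i=0}^{n-1}a_i(t)X^i$. Then for each $i$ with $a_i\neq0$, the set defining $B_i$ is nonempty and $\deg a_i\le B_i$.
   Context: The Newton polygon $N(h)\subset\mathbb{R}^2$ of $h\in\mathbb{F}_q[t,X]$ is the convex hull of all points $(a,b)$ such that the coefficient of $t^aX^b$ in $h$ is nonzero. For $S_1,S_2\subseteq\mathbb{R}^2$, $S_1+S_2=\{s_1+s_2:s_1\in S_1,s_2\in S_2\}$. $g'$ is the derivative with respect to $X$. *)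

theory Defs
  imports "HOL-Analysis.Analysis" "HOL-Computational_Algebra.Polynomial"
begin

text \<open>Bivariate polynomials in F_q[t][X] are modelled as 'a poly poly: the outer
  variable is X, the coefficients are polynomials in t.  The monomial t^a X^b of h
  has coefficient coeff (coeff h b) a.\<close>

definition newton_polygon :: "'a::zero poly poly \<Rightarrow> (real \<times> real) set" where
  "newton_polygon h = convex hull {(real a, real b) | a b. coeff (coeff h b) a \<noteq> 0}"

definition minkowski_sum :: "(real \<times> real) set \<Rightarrow> (real \<times> real) set \<Rightarrow> (real \<times> real) set" where
  "minkowski_sum S1 S2 = {s1 + s2 | s1 s2. s1 \<in> S1 \<and> s2 \<in> S2}"

definition B_set :: "'a::zero poly poly \<Rightarrow> nat \<Rightarrow> nat set" where
  "B_set f i = {m. (real m, real i) \<in> minkowski_sum (newton_polygon f) {(0, -1)}}"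

end

theory Submission
  imports Defs
begin

text \<open>Write \<open>f = g h\<close>, so that \<open>\<Phi>(g) = h g'\<close>. If \<open>t\<^sup>m X\<^sup>i\<close> occurs in \<open>h g'\<close>, then \<open>(m, i + 1)\<close> is
  the sum of an exponent of \<open>g\<close> and an exponent of \<open>h\<close>. Any such sum lies in \<open>N(f)\<close>: for a
  linear functional \<open>w\<close>, take the \<open>w\<close>-maximal exponents of \<open>g\<close> and \<open>h\<close>, with ties broken
  lexicographically; the coefficient of \<open>g h\<close> at their sum is the single product of the two
  leading coefficients, hence nonzero. So every linear functional is bounded on such sums by
  its value at some exponent of \<open>f\<close>, and the separating hyperplane theorem gives
  \<open>(m, i + 1) \<in> N(f)\<close>, i.e. \<open>m \<in> B\<^sub>i\<close>. Compactness of \<open>N(f)\<close> bounds \<open>B\<^sub>i\<close>.\<close>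

definition support2 :: "'a::zero poly poly \<Rightarrow> (nat \<times> nat) set" where
  "support2 p = {(a, b). coeff (coeff p b) a \<noteq> 0}"

definition lattice_point :: "nat \<times> nat \<Rightarrow> real \<times> real" where
  "lattice_point x = (real (fst x), real (snd x))"

lemma lattice_point_add: "lattice_point (x + y) = lattice_point x + lattice_point y"
  by (simp add: lattice_point_def)

lemma newton_polygon_eq: "newton_polygon h = convex hull (lattice_point ` support2 h)"
  unfolding newton_polygon_def support2_def lattice_point_def
  by (rule arg_cong[where f = "\<lambda>S. convex hull S"]) force

lemma finite_support2: "finite (support2 p)"
proof (rule finite_subset)
  show "support2 p \<subseteq> {..Max (degree ` coeff p ` {..degree p})} \<times> {..degree p}"
  proof clarify
    fix a b assume "(a, b) \<in> support2 p"
    then have nz: "coeff (coeff p b) a \<noteq> 0" by (simp add: support2_def)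
    then have "b \<le> degree p" by (metis coeff_0 le_degree)
    moreover have "a \<le> degree (coeff p b)" using nz by (rule le_degree)
    ultimately show "a \<in> {..Max (degree ` coeff p ` {..degree p})} \<and> b \<in> {..degree p}"
      by (auto intro: le_trans Max_ge)
  qed
qed simp

lemma support2_eq_empty_iff [simp]: "support2 p = {} \<longleftrightarrow> p = 0"
  by (auto simp: support2_def poly_eq_iff)

lemma compact_newton_polygon: "compact (newton_polygon h)"
  by (simp add: newton_polygon_eq compact_convex_hull finite_imp_compact finite_support2)

lemma coeff_coeff_mult:
  "coeff (coeff (p * q) b) a =
     (\<Sum>(j, k)\<in>{..b} \<times> {..a}. coeff (coeff p j) k * coeff (coeff q (b - j)) (a - k))"
  by (simp add: coeff_mult coeff_sum sum.cartesian_product)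

lemma support2_mult_subset:
  fixes p q :: "'a::comm_semiring_0 poly poly"
  shows "support2 (p * q) \<subseteq> {x + y | x y. x \<in> support2 p \<and> y \<in> support2 q}"
proof clarify
  fix a b assume "(a, b) \<in> support2 (p * q)"
  then obtain j k where jk: "j \<le> b" "k \<le> a"
    and "coeff (coeff p j) k * coeff (coeff q (b - j)) (a - k) \<noteq> 0"
    by (auto simp: support2_def coeff_coeff_mult elim!: sum.not_neutral_contains_not_neutral)
  then have "(k, j) \<in> support2 p" "(a - k, b - j) \<in> support2 q"
    by (auto simp: support2_def)
  moreover have "(a, b) = (k, j) + (a - k, b - j)" using jk by simp
  ultimately show "\<exists>x y. (a, b) = x + y \<and> x \<in> support2 p \<and> y \<in> support2 q" by blast
qed

lemma support2_pderiv:
  fixes p :: "'a::{comm_semiring_1,semiring_no_zero_divisors} poly poly"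
  assumes "(a, b) \<in> support2 (pderiv p)"
  shows "(a, Suc b) \<in> support2 p"
  using assms by (simp add: support2_def coeff_pderiv of_nat_mult_conv_smult del: of_nat_Suc)

definition weighted_lex_le :: "real \<times> real \<Rightarrow> nat \<times> nat \<Rightarrow> nat \<times> nat \<Rightarrow> bool" where
  "weighted_lex_le w x y \<longleftrightarrow>
     inner w (lattice_point x) < inner w (lattice_point y) \<or>
     inner w (lattice_point x) = inner w (lattice_point y) \<and>
       (snd x < snd y \<or> snd x = snd y \<and> fst x \<le> fst y)"

lemma weighted_lex_le_total: "weighted_lex_le w x y \<or> weighted_lex_le w y x"
  unfolding weighted_lex_le_def by linarith

lemma weighted_lex_le_trans:
  "weighted_lex_le w x y \<Longrightarrow> weighted_lex_le w y z \<Longrightarrow> weighted_lex_le w x z"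
  unfolding weighted_lex_le_def by linarith

lemma weighted_lex_le_weight:
  "weighted_lex_le w x y \<Longrightarrow> inner w (lattice_point x) \<le> inner w (lattice_point y)"
  unfolding weighted_lex_le_def by linarith

lemma weighted_lex_le_add_cancel:
  assumes "weighted_lex_le w x x'" "weighted_lex_le w y y'" "x + y = x' + y'"
  shows "x = x'"
proof -
  have "inner w (lattice_point x) + inner w (lattice_point y) =
        inner w (lattice_point x') + inner w (lattice_point y')"
    using assms(3) by (metis inner_add_right lattice_point_add)
  moreover have "fst x + fst y = fst x' + fst y'" "snd x + snd y = snd x' + snd y'"
    using assms(3) by (metis fst_add snd_add)+
  ultimately show ?thesis
    using assms(1,2) unfolding weighted_lex_le_def prod_eq_iff by linarith
qed

lemma finite_total_has_greatest:
  assumes "finite S" "S \<noteq> {}"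
    and "\<And>x y. R x y \<or> R y x" and "\<And>x y z. R x y \<Longrightarrow> R y z \<Longrightarrow> R x z"
  shows "\<exists>m\<in>S. \<forall>x\<in>S. R x m"
  using assms(1,2)
proof (induction rule: finite_ne_induct)
  case (singleton x)
  then show ?case using assms(3) by blast
next
  case (insert x F)
  then obtain m where "m \<in> F" "\<forall>y\<in>F. R y m" by blast
  then show ?case using assms(3,4) by (cases "R x m") blast+
qed

lemma support2_mult_greatest:
  fixes p q :: "'a::idom poly poly"
  assumes x0: "x0 \<in> support2 p" "\<forall>x\<in>support2 p. weighted_lex_le w x x0"
    and y0: "y0 \<in> support2 q" "\<forall>y\<in>support2 q. weighted_lex_le w y y0"
  shows "x0 + y0 \<in> support2 (p * q)"
proof -
  obtain a0 b0 c0 d0 where xy: "x0 = (a0, b0)" "y0 = (c0, d0)" by fastforce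
  define a b where "a = a0 + c0" and "b = b0 + d0"
  define summand where "summand = (\<lambda>(j, k). coeff (coeff p j) k * coeff (coeff q (b - j)) (a - k))"
  have "summand jk = 0" if box: "jk \<in> {..b} \<times> {..a}" and ne: "jk \<noteq> (b0, a0)" for jk
  proof (rule ccontr)
    obtain j k where jk: "jk = (j, k)" "j \<le> b" "k \<le> a" using box by blast
    assume "summand jk \<noteq> 0"
    then have "(k, j) \<in> support2 p" "(a - k, b - j) \<in> support2 q"
      by (auto simp: summand_def support2_def jk)
    moreover have "(k, j) + (a - k, b - j) = x0 + y0"
      using jk by (simp add: xy a_def b_def)
    ultimately have "(k, j) = x0" using x0 y0 weighted_lex_le_add_cancel by blast
    then show False using ne jk xy by simp
  qed
  then have "coeff (coeff (p * q) b) a = sum summand {(b0, a0)}"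
    unfolding coeff_coeff_mult summand_def[symmetric]
    by (intro sum.mono_neutral_right) (auto simp: a_def b_def)
  also have "\<dots> = summand (b0, a0)" by simp
  also have "\<dots> \<noteq> 0" using x0(1) y0(1) by (simp add: summand_def support2_def xy a_def b_def)
  finally show ?thesis by (simp add: support2_def xy a_def b_def)
qed

lemma support2_mult_max_weight:
  fixes p q :: "'a::idom poly poly"
  assumes "p \<noteq> 0" "q \<noteq> 0"
  obtains z where "z \<in> support2 (p * q)"
    and "\<And>x y. x \<in> support2 p \<Longrightarrow> y \<in> support2 q \<Longrightarrow>
           inner w (lattice_point (x + y)) \<le> inner w (lattice_point z)"
proof -
  have "\<exists>m\<in>support2 r. \<forall>x\<in>support2 r. weighted_lex_le w x m" if "r \<noteq> 0" for r :: "'a poly poly"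
    using that finite_support2 weighted_lex_le_total weighted_lex_le_trans
    by (intro finite_total_has_greatest) auto
  then obtain x0 y0
    where x0: "x0 \<in> support2 p" "\<forall>x\<in>support2 p. weighted_lex_le w x x0"
      and y0: "y0 \<in> support2 q" "\<forall>y\<in>support2 q. weighted_lex_le w y y0"
    using assms by meson
  show thesis
  proof (rule that[OF support2_mult_greatest[OF x0 y0]])
    fix x y assume "x \<in> support2 p" "y \<in> support2 q"
    then show "inner w (lattice_point (x + y)) \<le> inner w (lattice_point (x0 + y0))"
      using x0(2) y0(2) weighted_lex_le_weight
      by (simp add: lattice_point_add inner_add_right add_mono)
  qed
qed

lemma support2_sum_in_newton_polygon:
  fixes p q :: "'a::idom poly poly"
  assumes "x \<in> support2 p" "y \<in> support2 q"
  shows "lattice_point (x + y) \<in> newton_polygon (p * q)"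
proof (rule ccontr)
  have "p \<noteq> 0" "q \<noteq> 0" using assms by (auto simp: support2_def)
  assume "lattice_point (x + y) \<notin> newton_polygon (p * q)"
  then obtain w c where w: "inner w (lattice_point (x + y)) < c"
    and c: "\<forall>s\<in>newton_polygon (p * q). c < inner w s"
    using separating_hyperplane_closed_point[of "newton_polygon (p * q)"]
    by (metis compact_newton_polygon compact_imp_closed newton_polygon_eq convex_convex_hull)
  obtain z where z: "z \<in> support2 (p * q)"
    and max: "inner (- w) (lattice_point (x + y)) \<le> inner (- w) (lattice_point z)"
    using support2_mult_max_weight[OF \<open>p \<noteq> 0\<close> \<open>q \<noteq> 0\<close>, of "- w"] assms by metis
  have "lattice_point z \<in> newton_polygon (p * q)"
    using z by (simp add: newton_polygon_eq hull_inc)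
  then show False using w c max by force
qed

lemma B_set_iff: "m \<in> B_set f i \<longleftrightarrow> (real m, real i + 1) \<in> newton_polygon f"
  unfolding B_set_def minkowski_sum_def by (auto intro!: exI[of _ "real i + 1"])

lemma bdd_above_B_set: "bdd_above (B_set f i)"
proof -
  obtain K where K: "\<And>s. s \<in> newton_polygon f \<Longrightarrow> norm s \<le> K"
    using compact_imp_bounded[OF compact_newton_polygon] by (metis bounded_iff)
  have "m \<le> nat \<lceil>K\<rceil>" if "m \<in> B_set f i" for m
  proof -
    have "real m \<le> norm (real m, real i + 1)" by (rule norm_fst_le[of "real m", simplified])
    also have "\<dots> \<le> K" using that K by (simp add: B_set_iff)
    finally show ?thesis by linarith
  qed
  then show ?thesis by (rule bdd_aboveI)
qed

theorem lemma5p3: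
  fixes f g :: "'a::{field,finite} poly poly"
  assumes "degree f \<ge> 1"
    and "g \<noteq> 0" and "g dvd f"
    and "i < degree f"
    and "coeff (f * pderiv g div g) i \<noteq> 0"
  shows "B_set f i \<noteq> {} \<and> degree (coeff (f * pderiv g div g) i) \<le> Sup (B_set f i)"
proof -
  obtain h where f: "f = g * h" using \<open>g dvd f\<close> by blast
  have \<Phi>: "f * pderiv g div g = h * pderiv g"
    using \<open>g \<noteq> 0\<close> by (simp add: f mult.assoc mult.left_commute[of h])
  define m where "m = degree (coeff (h * pderiv g) i)"
  have "(m, i) \<in> support2 (h * pderiv g)"
    using assms(5) by (simp add: \<Phi> m_def support2_def)
  then obtain x y where "x \<in> support2 h" "y \<in> support2 (pderiv g)" and "(m, i) = x + y"
    using support2_mult_subset by blast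
  then have "(m, Suc i) = (fst y, Suc (snd y)) + x" "(fst y, Suc (snd y)) \<in> support2 g"
    using support2_pderiv[of "fst y" "snd y" g] by (auto simp: prod_eq_iff)
  with \<open>x \<in> support2 h\<close> have "lattice_point (m, Suc i) \<in> newton_polygon f"
    unfolding f by (metis support2_sum_in_newton_polygon)
  then have "m \<in> B_set f i" by (simp add: B_set_iff lattice_point_def add.commute)
  then show ?thesis using bdd_above_B_set cSup_upper by (auto simp: \<Phi> m_def)
qed

end
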